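(* Let $l>0$, $d>0$, $V>0$, $\gamma_{\max}\in(0,\pi/2)$, and $k_1,k_2\in\mathbb{R}$. Let $\overline{\kappa}_0=\dfrac{\tan\gamma_{\max}}{\sqrt{l^2+d^2\tan^2\gamma_{\max}}}$. Suppose either (1) $k_1<0$ and $k_2>\dfrac{d}{l}\dfrac{\tan^2\gamma_{\max}}{\sqrt{l^2+d^2\tan^2\gamma_{\max}}}$, or (2) $k_1>0$ and $k_2<-\dfrac{1}{d}$. Then for every constant curvature $\kappa_0$ with $|\kappa_0|\le\overline{\kappa}_0$, the desired path-following solution ($e_{\rm D}\equiv0$, $\hat\theta_{\rm D}\equiv 0$) of the closed-loop system is stable, in the sense that, with $\lambda_1=\sqrt{1-d^2\kappa_0^2}$ and $\lambda_2=1+(l^2-d^2)\kappa_0^2$, both eigenvalues of the matrix $$\mathbf{A}=\begin{bmatrix}\dfrac{Vd}{l}\dfrac{\lambda_2}{\lambda_1}k_1k_2 & \dfrac{V}{\lambda_1}\Big(1+\dfrac{d}{l}\lambda_2k_1\Big)\\[2mm] \dfrac{V}{l}\Big(\lambda_2k_1k_2-\dfrac{l}{\lambda_1}\kappa_0^2\Big) & \dfrac{V\lambda_2}{l}k_1\end{bmatrix}$$ have strictly negative real parts.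
   Context: Path-following setting: a vehicle (kinematic bicycle model, wheels without side slip, constant longitudinal speed $V>0$, wheelbase $l$, steering angle $\gamma$) must make a point A on its longitudinal symmetry axis, at distance $d$ ahead of the rear axle center, follow a planar path. With $s_{\rm D}$ the arc length of the closest path point D, $\kappa_{\rm D}$ the path curvature at D, $e_{\rm D}$ the signed lateral deviation of A from the path and $\theta_{\rm D}$ the yaw angle error relative to the path tangent at D, the dynamics are $\dot s_{\rm D}=\frac{V}{1-e_{\rm D}\kappa_{\rm D}}(\cos\theta_{\rm D}-\frac{d}{l}\tan\gamma\sin\theta_{\rm D})$, $\dot e_{\rm D}=V(\sin\theta_{\rm D}+\frac{d}{l}\tan\gamma\cos\theta_{\rm D})$, $\dot\theta_{\rm D}=\frac{V}{l}\tan\gamma-\frac{V\kappa_{\rm D}}{1-e_{\rm D}\kappa_{\rm D}}(\cos\theta_{\rm D}-\frac{d}{l}\tan\gamma\sin\theta_{\rm D})$. The steering angle is set to $\gamma=\gamma_{\rm ff}+\gamma_{\rm fb}$ with $\gamma_{\rm ff}=\arctan\frac{l\kappa_{\rm D}}{\sqrt{1-(d\kappa_{\rm D})^2}}$ and $\gamma_{\rm fb}=g\big(k_1(\theta_{\rm D}-\theta_0+\arctan(k_2e_{\rm D}))\big)$, where $\theta_0=-\arcsin(d\kappa_{\rm D})$ and $g$ is a bounded, odd, continuously differentiable, increasing function with $g'(0)=1$ (e.g. $g(x)=\frac{2g_{\rm sat}}{\pi}\arctan(\frac{\pi}{2g_{\rm sat}}x)$). Set $\hat\theta_{\rm D}=\theta_{\rm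 D}-\theta_0$. For constant curvature $\kappa_{\rm D}\equiv\kappa_0$ the closed loop has the desired solution $e_{\rm D}\equiv0$, $\hat\theta_{\rm D}\equiv0$; the matrix $\mathbf{A}$ is the Jacobian of the closed-loop $(e_{\rm D},\hat\theta_{\rm D})$ dynamics at this solution, and stability is understood as this linearization being Hurwitz. The bound $|\kappa_0|\le\overline\kappa_0$ is the standing assumption that the curvature can be followed with steering angle at most $\gamma_{\max}$. *)

theory Defs
  imports Complex_Main "Jordan_Normal_Form.Char_Poly"
begin

text \<open>Upper curvature bound that can be followed with steering angle at most gamma_max.\<close>
definition kappa_bar :: "real \<Rightarrow> real \<Rightarrow> real \<Rightarrow> real" where
  "kappa_bar l d gmax = tan gmax / sqrt (l^2 + d^2 * (tan gmax)^2)"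

text \<open>Linearization matrix A of the closed-loop (e_D, hat theta_D) dynamics at the
  desired solution, for constant curvature kappa0.\<close>
definition lin_matrix :: "real \<Rightarrow> real \<Rightarrow> real \<Rightarrow> real \<Rightarrow> real \<Rightarrow> real \<Rightarrow> real mat" where
  "lin_matrix l d V k1 k2 kappa0 =
     (let lam1 = sqrt (1 - d^2 * kappa0^2);
          lam2 = 1 + (l^2 - d^2) * kappa0^2
      in mat_of_rows_list 2
          [[V * d / l * lam2 / lam1 * k1 * k2, V / lam1 * (1 + d / l * lam2 * k1)],
           [V / l * (lam2 * k1 * k2 - l / lam1 * kappa0^2), V * lam2 / l * k1]])"

end

theory Submission
  imports Defs
begin

text \<open>The characteristic polynomial of a real 2x2 matrix is z^2 - (trace) z + det, so both
  eigenvalues have negative real part as soon as the trace is negative and the determinant positive.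
  For the linearization, with lam1 = sqrt (1 - d^2 kappa0^2) and lam2 = 1 + (l^2 - d^2) kappa0^2,
  the trace is a positive multiple of k1 (d k2 + lam1) and the determinant a positive multiple of
  l kappa0^2 - lam2 k1 (lam1 k2 - d kappa0^2). The curvature bound gives lam1 \<ge> l / S with
  S = sqrt (l^2 + d^2 tan^2 gmax), hence lam1 > 0 and lam2 > 0. Then both k1 (d k2 + lam1) and
  k1 (lam1 k2 - d kappa0^2) are negative: for k1 > 0 because d k2 < -1 \<le> -lam1, and for k1 < 0
  because lam1 k2 \<ge> (l / S) k2 > d kappa_bar^2 \<ge> d kappa0^2.\<close>

lemma det_mat_of_rows_list_2:
  fixes a b c e :: "'a :: comm_ring_1"
  shows "det (mat_of_rows_list 2 [[a, b], [c, e]]) = a * e - b * c"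
proof -
  let ?M = "mat_of_rows_list 2 [[a, b], [c, e]]"
  have M: "?M \<in> carrier_mat 2 2" by (simp add: mat_of_rows_list_def numeral_2_eq_2)
  have "det ?M = (\<Sum>i<2. ?M $$ (i,0) * cofactor ?M i 0)"
    by (rule laplace_expansion_column[OF M]) simp
  also have "\<dots> = a * e - b * c"
    by (simp add: numeral_2_eq_2 lessThan_Suc cofactor_def mat_delete_def mat_of_rows_list_def det_single)
  finally show ?thesis .
qed

lemma char_matrix_mat_of_rows_list_2:
  "char_matrix (mat_of_rows_list 2 [[a, b], [c, e]]) z = mat_of_rows_list 2 [[a - z, b], [c, e - z]]"
  by (rule eq_matI) (auto simp: char_matrix_def mat_of_rows_list_def numeral_2_eq_2 less_Suc_eq)

lemma eigenvalue_mat_of_rows_list_2_iff: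
  fixes a b c e z :: "'a :: field"
  shows "eigenvalue (mat_of_rows_list 2 [[a, b], [c, e]]) z \<longleftrightarrow> z^2 - (a + e) * z + (a * e - b * c) = 0"
proof -
  have "mat_of_rows_list 2 [[a, b], [c, e]] \<in> carrier_mat 2 2"
    by (simp add: mat_of_rows_list_def numeral_2_eq_2)
  then show ?thesis
    by (simp add: eigenvalue_det char_matrix_mat_of_rows_list_2 det_mat_of_rows_list_2 algebra_simps power2_eq_square)
qed

lemma map_mat_mat_of_rows_list_2:
  "map_mat f (mat_of_rows_list 2 [[a, b], [c, e]]) = mat_of_rows_list 2 [[f a, f b], [f c, f e]]"
  by (rule eq_matI) (auto simp: mat_of_rows_list_def numeral_2_eq_2 less_Suc_eq)

lemma quadratic_root_Re_neg:
  fixes p q :: real and z :: complex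
  assumes root: "z^2 + of_real p * z + of_real q = 0" and "p > 0" and "q > 0"
  shows "Re z < 0"
proof (cases "Im z = 0")
  case True
  with root have "Re z ^ 2 + p * Re z + q = 0"
    by (simp add: complex_eq_iff power2_eq_square)
  with assms(2,3) show ?thesis
    by (smt (verit) mult_nonneg_nonneg zero_le_power2)
next
  case False
  from root have "Im z * (2 * Re z + p) = 0"
    by (simp add: complex_eq_iff power2_eq_square algebra_simps)
  with False have "Re z = - p / 2" by simp
  with assms(2) show ?thesis by simp
qed

lemma eigenvalue_real_mat_2_Re_neg:
  fixes a b c e :: real and z :: complex
  assumes "eigenvalue (map_mat complex_of_real (mat_of_rows_list 2 [[a, b], [c, e]])) z"
    and "a + e < 0" and "a * e - b * c > 0"
  shows "Re z < 0"
proof (rule quadratic_root_Re_neg)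
  show "z^2 + of_real (- (a + e)) * z + of_real (a * e - b * c) = 0"
    using assms(1) by (simp add: map_mat_mat_of_rows_list_2 eigenvalue_mat_of_rows_list_2_iff algebra_simps)
qed (use assms(2,3) in auto)

lemma lin_matrix_trace_det:
  fixes l d V k1 k2 kappa0 :: real
  defines "lam1 \<equiv> sqrt (1 - d^2 * kappa0^2)" and "lam2 \<equiv> 1 + (l^2 - d^2) * kappa0^2"
  assumes "l > 0" and "d^2 * kappa0^2 < 1"
  obtains a b c e where "lin_matrix l d V k1 k2 kappa0 = mat_of_rows_list 2 [[a, b], [c, e]]"
    and "a + e = V * lam2 / (l * lam1) * (k1 * (d * k2 + lam1))"
    and "a * e - b * c = V^2 / (l * lam1^2) * (l * kappa0^2 - lam2 * k1 * (lam1 * k2 - d * kappa0^2))"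
proof
  have "lam1 > 0" using assms(4) by (simp add: lam1_def)
  with assms(3) show "V * d / l * lam2 / lam1 * k1 * k2 + V * lam2 / l * k1
      = V * lam2 / (l * lam1) * (k1 * (d * k2 + lam1))"
    and "V * d / l * lam2 / lam1 * k1 * k2 * (V * lam2 / l * k1)
      - V / lam1 * (1 + d / l * lam2 * k1) * (V / l * (lam2 * k1 * k2 - l / lam1 * kappa0^2))
      = V^2 / (l * lam1^2) * (l * kappa0^2 - lam2 * k1 * (lam1 * k2 - d * kappa0^2))"
    by (simp_all add: field_simps power2_eq_square)
qed (simp add: lin_matrix_def lam1_def lam2_def Let_def)

lemma eigenvalue_lin_matrix_Re_neg:
  fixes l d V k1 k2 kappa0 :: real and z :: complex
  defines "lam1 \<equiv> sqrt (1 - d^2 * kappa0^2)"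
  assumes "l > 0" and "V > 0" and "d^2 * kappa0^2 < 1"
    and "k1 * (d * k2 + lam1) < 0" and "k1 * (lam1 * k2 - d * kappa0^2) < 0"
    and "eigenvalue (map_mat complex_of_real (lin_matrix l d V k1 k2 kappa0)) z"
  shows "Re z < 0"
proof -
  define lam2 where "lam2 = 1 + (l^2 - d^2) * kappa0^2"
  have "lam1 > 0" using assms(4) by (simp add: lam1_def)
  have "lam2 = (1 - d^2 * kappa0^2) + l^2 * kappa0^2" by (simp add: lam2_def algebra_simps)
  with assms(4) have "lam2 > 0" by (simp add: add_pos_nonneg)
  obtain a b c e where A: "lin_matrix l d V k1 k2 kappa0 = mat_of_rows_list 2 [[a, b], [c, e]]"
    and tr: "a + e = V * lam2 / (l * lam1) * (k1 * (d * k2 + lam1))"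
    and det: "a * e - b * c = V^2 / (l * lam1^2) * (l * kappa0^2 - lam2 * k1 * (lam1 * k2 - d * kappa0^2))"
    using lin_matrix_trace_det[OF assms(2,4)] unfolding lam1_def lam2_def by blast
  have scale: "V * lam2 / (l * lam1) > 0" "V^2 / (l * lam1^2) > 0"
    using assms(2,3) \<open>lam1 > 0\<close> \<open>lam2 > 0\<close> by simp_all
  have trace_neg: "a + e < 0"
    unfolding tr by (rule mult_pos_neg[OF scale(1) assms(5)])
  have "lam2 * k1 * (lam1 * k2 - d * kappa0^2) < 0"
    using mult_pos_neg[OF \<open>lam2 > 0\<close> assms(6)] by (simp add: mult.assoc)
  moreover have "l * kappa0^2 \<ge> 0" using assms(2) by simp
  ultimately have "l * kappa0^2 - lam2 * k1 * (lam1 * k2 - d * kappa0^2) > 0" by linarith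
  then have det_pos: "a * e - b * c > 0"
    unfolding det by (rule mult_pos_pos[OF scale(2)])
  from assms(7) show "Re z < 0"
    unfolding A by (rule eigenvalue_real_mat_2_Re_neg[OF _ trace_neg det_pos])
qed

lemma sqrt_one_minus_ge_of_le_kappa_bar:
  fixes l d g kappa0 :: real
  assumes "l > 0" and "\<bar>kappa0\<bar> \<le> kappa_bar l d g"
  shows "l / sqrt (l^2 + d^2 * (tan g)^2) \<le> sqrt (1 - d^2 * kappa0^2)"
proof -
  define S where "S = sqrt (l^2 + d^2 * (tan g)^2)"
  have S: "S > 0" and S2: "S^2 = l^2 + d^2 * (tan g)^2"
    using assms(1) by (simp_all add: S_def add_pos_nonneg)
  have "kappa0^2 \<le> (tan g / S)^2"
    using assms(2) unfolding kappa_bar_def S_def[symmetric] by (metis abs_ge_zero power2_abs power_mono)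
  then have "d^2 * kappa0^2 \<le> d^2 * (tan g / S)^2"
    by (simp add: mult_left_mono)
  also have "\<dots> = 1 - (l / S)^2"
    using S by (simp add: power_divide field_simps, simp add: S2)
  finally have "(l / S)^2 \<le> 1 - d^2 * kappa0^2" by simp
  then show ?thesis
    unfolding S_def[symmetric] using real_le_rsqrt by simp
qed

lemma lateral_gain_bound_of_le_kappa_bar:
  fixes l d g k2 kappa0 :: real
  assumes "l > 0" and "d > 0" and "\<bar>kappa0\<bar> \<le> kappa_bar l d g"
    and "k2 > d / l * (tan g)^2 / sqrt (l^2 + d^2 * (tan g)^2)"
  shows "d * kappa0^2 < sqrt (1 - d^2 * kappa0^2) * k2"
proof -
  define S where "S = sqrt (l^2 + d^2 * (tan g)^2)"
  have S: "S > 0" using assms(1) by (simp add: S_def add_pos_nonneg)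
  have k2: "k2 > d / l * (tan g)^2 / S" using assms(4) by (simp add: S_def)
  then have "k2 > 0" using assms(1,2) S by (smt (verit) divide_nonneg_pos zero_le_power2 mult_nonneg_nonneg)
  have "d * kappa0^2 \<le> d * (tan g / S)^2"
    using assms(2,3) unfolding kappa_bar_def S_def[symmetric]
    by (metis abs_ge_zero less_imp_le mult_left_mono power2_abs power_mono)
  also have "\<dots> = l / S * (d / l * (tan g)^2 / S)"
    using assms(1) by (simp add: power2_eq_square)
  also have "\<dots> < l / S * k2"
    by (rule mult_strict_left_mono[OF k2]) (use assms(1) S in simp)
  also have "\<dots> \<le> sqrt (1 - d^2 * kappa0^2) * k2"
    using mult_right_mono[OF sqrt_one_minus_ge_of_le_kappa_bar[OF assms(1,3)], of k2] \<open>k2 > 0\<close>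
    unfolding S_def by simp
  finally show ?thesis .
qed

lemma gain_conditions_of_k1_neg:
  fixes d k1 k2 lam1 kappa0 :: real
  assumes "k1 < 0" and "d > 0" and "lam1 > 0" and "d * kappa0^2 < lam1 * k2"
  shows "k1 * (d * k2 + lam1) < 0" and "k1 * (lam1 * k2 - d * kappa0^2) < 0"
proof -
  have "lam1 * k2 > 0" using assms(2,4) by (smt (verit) mult_nonneg_nonneg zero_le_power2)
  then have "k2 > 0" using assms(3) by (simp add: zero_less_mult_iff)
  then show "k1 * (d * k2 + lam1) < 0" using assms(1-3) by (simp add: mult_neg_pos add_pos_pos)
  show "k1 * (lam1 * k2 - d * kappa0^2) < 0" using assms(1,4) by (simp add: mult_neg_pos)
qed

lemma gain_conditions_of_k1_pos:
  fixes d k1 k2 lam1 kappa0 :: real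
  assumes "k1 > 0" and "d > 0" and "0 < lam1" and "lam1 \<le> 1" and "k2 < - 1 / d"
  shows "k1 * (d * k2 + lam1) < 0" and "k1 * (lam1 * k2 - d * kappa0^2) < 0"
proof -
  have "d * k2 < -1" using assms(2,5) by (simp add: field_simps)
  then show "k1 * (d * k2 + lam1) < 0" using assms(1,4) by (simp add: mult_pos_neg)
  have "k2 < 0" using \<open>d * k2 < -1\<close> assms(2) by (smt (verit) mult_nonneg_nonneg)
  then have "lam1 * k2 - d * kappa0^2 < 0"
    using assms(2,3) by (smt (verit) mult_pos_neg mult_nonneg_nonneg zero_le_power2)
  then show "k1 * (lam1 * k2 - d * kappa0^2) < 0" using assms(1) by (simp add: mult_pos_neg)
qed

theorem proposition1:
  fixes l d V gmax k1 k2 :: real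
  assumes "l > 0" and "d > 0" and "V > 0"
    and "0 < gmax" and "gmax < pi / 2"
    and "(k1 < 0 \<and> k2 > d / l * (tan gmax)^2 / sqrt (l^2 + d^2 * (tan gmax)^2))
         \<or> (k1 > 0 \<and> k2 < - 1 / d)"
  shows "\<forall>kappa0 :: real. \<bar>kappa0\<bar> \<le> kappa_bar l d gmax \<longrightarrow>
           (\<forall>ev :: complex. eigenvalue (map_mat complex_of_real (lin_matrix l d V k1 k2 kappa0)) ev
              \<longrightarrow> Re ev < 0)"
proof (intro allI impI)
  fix kappa0 :: real and z :: complex
  assume bound: "\<bar>kappa0\<bar> \<le> kappa_bar l d gmax"
    and ev: "eigenvalue (map_mat complex_of_real (lin_matrix l d V k1 k2 kappa0)) z"
  define lam1 where "lam1 = sqrt (1 - d^2 * kappa0^2)"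
  have "0 < l / sqrt (l^2 + d^2 * (tan gmax)^2)"
    using assms(1) by (simp add: add_pos_nonneg)
  also have "\<dots> \<le> lam1"
    unfolding lam1_def by (rule sqrt_one_minus_ge_of_le_kappa_bar[OF assms(1) bound])
  finally have "lam1 > 0" .
  then have "d^2 * kappa0^2 < 1" and "lam1 \<le> 1" by (simp_all add: lam1_def)
  moreover have "k1 * (d * k2 + lam1) < 0 \<and> k1 * (lam1 * k2 - d * kappa0^2) < 0"
    using assms(6) gain_conditions_of_k1_pos[OF _ assms(2) \<open>lam1 > 0\<close> \<open>lam1 \<le> 1\<close>]
      gain_conditions_of_k1_neg[OF _ assms(2) \<open>lam1 > 0\<close>]
      lateral_gain_bound_of_le_kappa_bar[OF assms(1,2) bound]
    unfolding lam1_def by blast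
  ultimately show "Re z < 0"
    using eigenvalue_lin_matrix_Re_neg[OF assms(1,3) _ _ _ ev] unfolding lam1_def by blast
qed

end
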